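(* Let $V$ be a finite set, $f:2^V\to\mathbb{R}_+$ nonnegative submodular with $f(\emptyset)=0$, $t_1,\ldots,t_k\in V$ distinct, and $\mathbf{x}=(x_{i,j})_{i\in[k],j\in V}$ with $x_{i,j}\ge0$, $\sum_{i=1}^k x_{i,j}=1$ for all $j\in V$, and $x_{i,t_i}=1$ for all $i$. For $\theta\in[0,1]$ let $A_i(\theta)=\{j: x_{i,j}>\theta\}$, $A(\theta)=\bigcup_{i=1}^k A_i(\theta)$ and $U(\theta)=V\setminus A(\theta)$. Then for any $\delta\in[\tfrac12,1]$, $$\sum_{i=1}^{k-1}\int_0^\delta f\big((A_1(\theta)\cup\cdots\cup A_i(\theta))\cap A_{i+1}(\theta)\big)\,d\theta\ \ge\ \int_0^1 f(U(\theta))\,d\theta.$$ *)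

theory Defs
  imports "HOL-Analysis.Analysis"
begin

definition submodular_on :: "'a set \<Rightarrow> ('a set \<Rightarrow> real) \<Rightarrow> bool" where
  "submodular_on V f \<longleftrightarrow>
     (\<forall>S T. S \<subseteq> V \<longrightarrow> T \<subseteq> V \<longrightarrow> f (S \<union> T) + f (S \<inter> T) \<le> f S + f T)"

definition thr_set :: "'a set \<Rightarrow> (nat \<Rightarrow> 'a \<Rightarrow> real) \<Rightarrow> nat \<Rightarrow> real \<Rightarrow> 'a set" where
  "thr_set V x i \<theta> = {j \<in> V. x i j > \<theta>}"

end

theory Submission
  imports Defs
begin

text \<open>
  Write \<open>m\<^sub>j = max\<^sub>i x\<^sub>i\<^sub>,\<^sub>j\<close> and \<open>g\<^sub>i\<^sub>,\<^sub>j = min (max\<^sub>l\<^sub>\<le>\<^sub>i x\<^sub>l\<^sub>,\<^sub>j) x\<^sub>i\<^sub>+\<^sub>1\<^sub>,\<^sub>j\<close>. Then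
  \<open>U(\<theta>) = {j. m\<^sub>j \<le> \<theta>}\<close> and the \<open>i\<close>-th set on the left is \<open>{j. g\<^sub>i\<^sub>,\<^sub>j > \<theta>}\<close>, so both
  sides integrate \<open>f\<close> over level sets of a function on \<open>V\<close>. Since the level sets of \<open>m\<close>
  form a chain, the greedy algorithm produces \<open>y\<close> with \<open>y(S) \<le> f(S)\<close> for all \<open>S\<close> and
  equality on that chain; hence the right-hand side equals \<open>\<Sum>\<^sub>j y\<^sub>j (1 - m\<^sub>j)\<close>, while the
  \<open>i\<close>-th integral on the left is at least \<open>\<Sum>\<^sub>j y\<^sub>j g\<^sub>i\<^sub>,\<^sub>j\<close> because \<open>g\<^sub>i\<^sub>,\<^sub>j \<le> 1/2 \<le> \<delta>\<close>.
  Finally \<open>1 - m\<^sub>j = \<Sum>\<^sub>i g\<^sub>i\<^sub>,\<^sub>j\<close>, by telescoping \<open>max a b + min a b = a + b\<close>.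
\<close>

lemma has_integral_if_less:
  fixes a b c :: real
  assumes "a \<le> c" "c \<le> b"
  shows "((\<lambda>\<theta>. if \<theta> < c then 1 else 0) has_integral (c - a)) {a..b}"
proof -
  have "((\<lambda>\<theta>. if \<theta> < c then 1 else 0) has_integral (c - a)) {a..c}"
    by (rule has_integral_spike_finite[where S="{c}" and f="\<lambda>_. 1"])
       (use has_integral_const_real[of "1::real" a c] assms in auto)
  moreover have "((\<lambda>\<theta>. if \<theta> < c then 1 else 0) has_integral 0) {c..b}"
    by (rule has_integral_spike_finite[where S="{}" and f="\<lambda>_. 0"]) auto
  ultimately show ?thesis
    using has_integral_combine[OF assms] by fastforce
qed

lemma has_integral_if_ge:
  fixes a b c :: real
  assumes "a \<le> c" "c \<le> b"
  shows "((\<lambda>\<theta>. if c \<le> \<theta> then 1 else 0) has_integral (b - c)) {a..b}"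
proof -
  have "((\<lambda>\<theta>. if c \<le> \<theta> then 1 else 0) has_integral 0) {a..c}"
    by (rule has_integral_spike_finite[where S="{c}" and f="\<lambda>_. 0"]) auto
  moreover have "((\<lambda>\<theta>. if c \<le> \<theta> then 1 else 0) has_integral (b - c)) {c..b}"
    by (rule has_integral_spike_finite[where S="{}" and f="\<lambda>_. 1"])
       (use has_integral_const_real[of "1::real" c b] assms in auto)
  ultimately show ?thesis
    using has_integral_combine[OF assms] by fastforce
qed

lemma set_take_takeWhile_down_closed:
  assumes "sorted_wrt R vs" and "\<And>u v. R u v \<Longrightarrow> P v \<Longrightarrow> P u"
  shows "{v \<in> set vs. P v} = set (take (length (takeWhile P vs)) vs)"
  using assms
proof (induction vs)
  case (Cons a vs)
  then show ?case
    by (cases "P a") auto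
qed simp

lemma finite_set_sorted_enumeration:
  fixes r :: "'a \<Rightarrow> 'b::linorder"
  assumes "finite V"
  obtains vs where "distinct vs" "set vs = V"
    "\<And>S. S \<subseteq> V \<Longrightarrow> (\<And>u v. u \<in> V \<Longrightarrow> v \<in> S \<Longrightarrow> r u \<le> r v \<Longrightarrow> u \<in> S) \<Longrightarrow>
       \<exists>n. S = set (take n vs)"
proof -
  obtain xs where xs: "distinct xs" "set xs = V"
    using finite_distinct_list[OF assms] by blast
  define vs where "vs = sort_key r xs"
  have sorted: "sorted_wrt (\<lambda>u v. r u \<le> r v) vs"
    by (simp add: vs_def sorted_wrt_map[symmetric])
  have "\<exists>n. S = set (take n vs)"
    if "S \<subseteq> V" and closed: "\<And>u v. u \<in> V \<Longrightarrow> v \<in> S \<Longrightarrow> r u \<le> r v \<Longrightarrow> u \<in> S" for S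
  proof -
    have "{v \<in> set vs. v \<in> S} = set (take (length (takeWhile (\<lambda>v. v \<in> S) vs)) vs)"
    proof (rule set_take_takeWhile_down_closed)
      show "sorted_wrt (\<lambda>u v. u \<in> V \<and> r u \<le> r v) vs"
        using sorted xs(2) by (auto simp: vs_def elim: sorted_wrt_mono_rel[rotated])
    qed (use closed in blast)
    then show ?thesis
      using \<open>S \<subseteq> V\<close> xs(2) by (auto simp: vs_def)
  qed
  then show thesis
    using that[of vs] xs by (simp add: vs_def)
qed

lemma submodular_greedy_vector:
  assumes sub: "submodular_on V f" and f0: "f {} = 0"
    and "distinct vs" "set vs \<subseteq> V"
  shows "\<exists>y. (\<forall>S\<subseteq>set vs. sum y S \<le> f S) \<and> (\<forall>n. sum y (set (take n vs)) = f (set (take n vs)))"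
  using assms(3,4)
proof (induction vs rule: rev_induct)
  case Nil
  show ?case by (rule exI[of _ "\<lambda>_. 0"]) (auto simp: f0)
next
  case (snoc v vs)
  then have vs: "distinct vs" "v \<notin> set vs" "set vs \<subseteq> V" "v \<in> V" by auto
  from snoc.IH[OF vs(1,3)] obtain y where below: "\<forall>S\<subseteq>set vs. sum y S \<le> f S"
    and tight: "\<forall>n. sum y (set (take n vs)) = f (set (take n vs))" by blast
  define y' where "y' = y(v := f (insert v (set vs)) - f (set vs))"
  have y'_eq: "sum y' S = sum y S" if "S \<subseteq> set vs" for S
    using that vs(2) by (auto simp: y'_def intro!: sum.cong)
  have tight_all: "sum y (set vs) = f (set vs)"
    using tight[rule_format, of "length vs"] by simp
  show ?case
  proof (intro exI[of _ y'] conjI allI impI)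
    fix S assume S: "S \<subseteq> set (vs @ [v])"
    show "sum y' S \<le> f S"
    proof (cases "v \<in> S")
      case True
      have "S - {v} \<subseteq> set vs" using S by auto
      have "sum y' S = y' v + sum y' (S - {v})"
        using sum.remove[OF finite_subset[OF S] True] by simp
      also have "\<dots> = f (insert v (set vs)) - f (set vs) + sum y (S - {v})"
        using y'_eq[OF \<open>S - {v} \<subseteq> set vs\<close>] by (simp add: y'_def)
      also have "\<dots> \<le> f (S \<union> set vs) - f (set vs) + f (S \<inter> set vs)"
      proof -
        have "S \<union> set vs = insert v (set vs)" "S \<inter> set vs = S - {v}"
          using S True vs(2) by auto
        then show ?thesis
          using below \<open>S - {v} \<subseteq> set vs\<close> by auto
      qed
      also have "\<dots> \<le> f S"
      proof -
        have "S \<subseteq> V" using S vs(3,4) by auto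
        then have "f (S \<union> set vs) + f (S \<inter> set vs) \<le> f S + f (set vs)"
          using sub vs(3) by (simp add: submodular_on_def)
        then show ?thesis by linarith
      qed
      finally show ?thesis .
    next
      case False
      then have "S \<subseteq> set vs" using S by auto
      then show ?thesis using below y'_eq by simp
    qed
  next
    fix n
    show "sum y' (set (take n (vs @ [v]))) = f (set (take n (vs @ [v])))"
    proof (cases "n \<le> length vs")
      case True
      then show ?thesis using y'_eq tight by (simp add: set_take_subset)
    next
      case False
      then show ?thesis using vs(2) y'_eq[of "set vs"] tight_all by (simp add: y'_def)
    qed
  qed
qed

lemma has_integral_sum_level_set:
  fixes y w :: "'a \<Rightarrow> real"
  assumes "finite V"
    and "\<And>j. j \<in> V \<Longrightarrow> ((\<lambda>\<theta>. if Q \<theta> j then 1 else 0) has_integral w j) {a..b}"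
  shows "((\<lambda>\<theta>. sum y {j\<in>V. Q \<theta> j}) has_integral (\<Sum>j\<in>V. y j * w j)) {a..b}"
proof -
  have "sum y {j\<in>V. Q \<theta> j} = (\<Sum>j\<in>V. y j * (if Q \<theta> j then 1 else 0))" for \<theta>
    using assms(1) by (simp add: sum.inter_filter[symmetric] if_distrib cong: if_cong)
  moreover have "((\<lambda>\<theta>. \<Sum>j\<in>V. y j * (if Q \<theta> j then 1 else 0)) has_integral (\<Sum>j\<in>V. y j * w j)) {a..b}"
    using assms by (intro has_integral_sum has_integral_mult_right) auto
  ultimately show ?thesis
    by simp
qed

text \<open>On a nested family of level sets \<open>f\<close> agrees with the greedy modular minorant, so
  integrating \<open>f\<close> over it is linear in the indicator integrals (the Lovasz extension).\<close>

lemma has_integral_submodular_level_sets: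
  fixes r :: "'a \<Rightarrow> 'b::linorder" and w :: "'a \<Rightarrow> real"
  assumes "finite V" "submodular_on V f" "f {} = 0"
    and ind: "\<And>j. j \<in> V \<Longrightarrow> ((\<lambda>\<theta>. if Q \<theta> j then 1 else 0) has_integral w j) {a..b}"
    and nested: "\<And>\<theta> u v. u \<in> V \<Longrightarrow> v \<in> V \<Longrightarrow> r u \<le> r v \<Longrightarrow> Q \<theta> v \<Longrightarrow> Q \<theta> u"
  obtains y where "\<forall>S\<subseteq>V. sum y S \<le> f S"
    "((\<lambda>\<theta>. f {j\<in>V. Q \<theta> j}) has_integral (\<Sum>j\<in>V. y j * w j)) {a..b}"
proof -
  obtain vs where vs: "distinct vs" "set vs = V"
    and prefix: "\<And>S. S \<subseteq> V \<Longrightarrow> (\<And>u v. u \<in> V \<Longrightarrow> v \<in> S \<Longrightarrow> r u \<le> r v \<Longrightarrow> u \<in> S) \<Longrightarrow>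
       \<exists>n. S = set (take n vs)"
    using finite_set_sorted_enumeration[OF assms(1)] by metis
  obtain y where below: "\<forall>S\<subseteq>V. sum y S \<le> f S"
    and tight: "\<forall>n. sum y (set (take n vs)) = f (set (take n vs))"
    using submodular_greedy_vector[OF assms(2,3) vs(1)] vs(2) by auto
  have "f {j\<in>V. Q \<theta> j} = sum y {j\<in>V. Q \<theta> j}" for \<theta>
    using prefix[of "{j\<in>V. Q \<theta> j}"] nested tight by fastforce
  moreover have "((\<lambda>\<theta>. sum y {j\<in>V. Q \<theta> j}) has_integral (\<Sum>j\<in>V. y j * w j)) {a..b}"
    by (rule has_integral_sum_level_set[OF assms(1)]) (rule ind)
  ultimately show thesis
    using that below by simp
qed

lemma integral_submodular_level_sets_ge:
  fixes r :: "'a \<Rightarrow> 'b::linorder" and y w :: "'a \<Rightarrow> real"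
  assumes "finite V" "submodular_on V f" "f {} = 0"
    and below: "\<forall>S\<subseteq>V. sum y S \<le> f S"
    and ind: "\<And>j. j \<in> V \<Longrightarrow> ((\<lambda>\<theta>. if Q \<theta> j then 1 else 0) has_integral w j) {a..b}"
    and nested: "\<And>\<theta> u v. u \<in> V \<Longrightarrow> v \<in> V \<Longrightarrow> r u \<le> r v \<Longrightarrow> Q \<theta> v \<Longrightarrow> Q \<theta> u"
  shows "(\<Sum>j\<in>V. y j * w j) \<le> integral {a..b} (\<lambda>\<theta>. f {j\<in>V. Q \<theta> j})"
proof -
  obtain z where "((\<lambda>\<theta>. f {j\<in>V. Q \<theta> j}) has_integral (\<Sum>j\<in>V. z j * w j)) {a..b}"
    by (rule has_integral_submodular_level_sets[OF assms(1-3), where Q=Q and w=w and r=r])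
       (use ind nested in auto)
  then have "(\<lambda>\<theta>. f {j\<in>V. Q \<theta> j}) integrable_on {a..b}" by blast
  moreover have "((\<lambda>\<theta>. sum y {j\<in>V. Q \<theta> j}) has_integral (\<Sum>j\<in>V. y j * w j)) {a..b}"
    by (rule has_integral_sum_level_set[OF assms(1)]) (rule ind)
  ultimately show ?thesis
    using below by (intro has_integral_le[OF _ integrable_integral]) auto
qed

primrec prefix_max :: "(nat \<Rightarrow> 'a \<Rightarrow> real) \<Rightarrow> nat \<Rightarrow> 'a \<Rightarrow> real" where
  "prefix_max x 0 j = 0"
| "prefix_max x (Suc i) j = max (prefix_max x i j) (x (Suc i) j)"

lemma prefix_max_nonneg: "0 \<le> prefix_max x i j"
  by (induction i) auto

lemma prefix_max_gt_iff:
  assumes "0 \<le> \<theta>"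
  shows "\<theta> < prefix_max x i j \<longleftrightarrow> (\<exists>l\<in>{1..i}. \<theta> < x l j)"
proof (induction i)
  case (Suc i)
  have "{1..Suc i} = insert (Suc i) {1..i}" by auto
  then show ?case using Suc by auto
qed (use assms in simp)

lemma prefix_max_le_sum:
  assumes "\<forall>l\<in>{1..i}. 0 \<le> x l j"
  shows "prefix_max x i j \<le> (\<Sum>l=1..i. x l j)"
  using assms
proof (induction i)
  case (Suc i)
  have "0 \<le> (\<Sum>l=1..i. x l j)" "0 \<le> x (Suc i) j"
    using Suc.prems by (auto intro!: sum_nonneg)
  moreover have "prefix_max x i j \<le> (\<Sum>l=1..i. x l j)"
    using Suc by simp
  ultimately show ?case by (simp add: sum.cl_ivl_Suc)
qed simp

lemma sum_eq_prefix_max_plus_sum_min: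
  "(\<Sum>l=1..i. x l j) = prefix_max x i j + (\<Sum>l<i. min (prefix_max x l j) (x (Suc l) j))"
proof (induction i)
  case (Suc i)
  then show ?case
    by (simp add: sum.cl_ivl_Suc max_def min_def)
qed simp

lemma thr_set_union_inter_eq:
  assumes "0 \<le> \<theta>"
  shows "(\<Union>l\<in>{1..i}. thr_set V x l \<theta>) \<inter> thr_set V x (i+1) \<theta> =
    {j\<in>V. \<theta> < min (prefix_max x i j) (x (Suc i) j)}"
  using prefix_max_gt_iff[OF assms, of x i] by (auto simp: thr_set_def)

lemma thr_set_uncovered_eq:
  assumes "0 \<le> \<theta>"
  shows "V - (\<Union>i\<in>{1..k}. thr_set V x i \<theta>) = {j\<in>V. prefix_max x k j \<le> \<theta>}"
proof -
  have "j \<notin> (\<Union>i\<in>{1..k}. thr_set V x i \<theta>) \<longleftrightarrow> prefix_max x k j \<le> \<theta>" if "j \<in> V" for j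
    using prefix_max_gt_iff[OF assms, of x k j] that by (auto simp: thr_set_def not_less)
  then show ?thesis by blast
qed

lemma min_prefix_max_le_half:
  assumes "\<forall>l\<in>{1..Suc i}. 0 \<le> x l j" and "(\<Sum>l=1..Suc i. x l j) \<le> 1"
  shows "min (prefix_max x i j) (x (Suc i) j) \<le> 1/2"
proof -
  have "prefix_max x i j \<le> (\<Sum>l=1..i. x l j)"
    using assms(1) by (intro prefix_max_le_sum) auto
  then have "prefix_max x i j + x (Suc i) j \<le> 1"
    using assms(2) by (simp add: sum.cl_ivl_Suc)
  then show ?thesis by linarith
qed

lemma one_minus_prefix_max_eq_sum_min:
  fixes x :: "nat \<Rightarrow> 'a \<Rightarrow> real"
  assumes "\<forall>l\<in>{1..k}. 0 \<le> x l j" and "(\<Sum>l=1..k. x l j) = 1"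
  shows "1 - prefix_max x k j = (\<Sum>i=1..k-1. min (prefix_max x i j) (x (Suc i) j))"
proof -
  obtain k' where k: "k = Suc k'"
    using assms(2) by (cases k) auto
  then have "0 \<le> x 1 j"
    using assms(1) by auto
  have "(\<Sum>i<Suc k'. min (prefix_max x i j) (x (Suc i) j)) =
      min 0 (x 1 j) + (\<Sum>i=1..k'. min (prefix_max x i j) (x (Suc i) j))"
    by (simp add: lessThan_Suc_atMost atLeast0AtMost[symmetric] sum.atLeast_Suc_atMost)
  then show ?thesis
    using sum_eq_prefix_max_plus_sum_min[where i=k and x=x and j=j] \<open>0 \<le> x 1 j\<close> assms(2) k
    by simp
qed

lemma partial_sum_le_one:
  fixes x :: "nat \<Rightarrow> 'a \<Rightarrow> real"
  assumes "\<forall>l\<in>{1..k}. 0 \<le> x l j" and "(\<Sum>l=1..k. x l j) = 1" and "i \<le> k"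
  shows "(\<Sum>l=1..i. x l j) \<le> 1"
proof -
  have "(\<Sum>l=1..i. x l j) \<le> (\<Sum>l=1..k. x l j)"
    using assms(1,3) by (intro sum_mono2) auto
  then show ?thesis using assms(2) by simp
qed

lemma integral_uncovered_eq_modular:
  assumes "finite V" "submodular_on V f" "f {} = 0"
    and nonneg: "\<forall>i\<in>{1..k}. \<forall>j\<in>V. 0 \<le> x i j"
    and sum_one: "\<forall>j\<in>V. (\<Sum>i=1..k. x i j) = 1"
  obtains y where "\<forall>S\<subseteq>V. sum y S \<le> f S"
    "integral {0..1} (\<lambda>\<theta>. f (V - (\<Union>i\<in>{1..k}. thr_set V x i \<theta>))) =
       (\<Sum>j\<in>V. y j * (1 - prefix_max x k j))"
proof -
  let ?m = "\<lambda>j. prefix_max x k j"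
  have m_range: "0 \<le> ?m j \<and> ?m j \<le> 1" if "j \<in> V" for j
  proof -
    have col: "\<forall>l\<in>{1..k}. 0 \<le> x l j" "(\<Sum>l=1..k. x l j) = 1"
      using nonneg sum_one that by auto
    show ?thesis
      using prefix_max_nonneg[of x k j] prefix_max_le_sum[of k x j] col by linarith
  qed
  obtain y where below: "\<forall>S\<subseteq>V. sum y S \<le> f S"
    and level_sets: "((\<lambda>\<theta>. f {j\<in>V. ?m j \<le> \<theta>}) has_integral (\<Sum>j\<in>V. y j * (1 - ?m j))) {0..1}"
    by (rule has_integral_submodular_level_sets[OF assms(1-3),
          where Q="\<lambda>\<theta> j. ?m j \<le> \<theta>" and w="\<lambda>j. 1 - ?m j" and a=0 and b=1 and r="?m"])
       (use has_integral_if_ge m_range in auto)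
  have "integral {0..1} (\<lambda>\<theta>. f (V - (\<Union>i\<in>{1..k}. thr_set V x i \<theta>))) =
      integral {0..1} (\<lambda>\<theta>. f {j\<in>V. ?m j \<le> \<theta>})"
    by (rule integral_cong) (subst thr_set_uncovered_eq; simp)
  also have "\<dots> = (\<Sum>j\<in>V. y j * (1 - ?m j))"
    using level_sets by (rule integral_unique)
  finally show thesis
    using that below by blast
qed

lemma integral_union_inter_ge_modular:
  assumes "finite V" "submodular_on V f" "f {} = 0"
    and below: "\<forall>S\<subseteq>V. sum y S \<le> f S"
    and nonneg: "\<forall>i\<in>{1..k}. \<forall>j\<in>V. 0 \<le> x i j"
    and sum_one: "\<forall>j\<in>V. (\<Sum>i=1..k. x i j) = 1"
    and "1/2 \<le> \<delta>" and "Suc i \<le> k"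
  shows "(\<Sum>j\<in>V. y j * min (prefix_max x i j) (x (Suc i) j)) \<le>
    integral {0..\<delta>} (\<lambda>\<theta>. f ((\<Union>l\<in>{1..i}. thr_set V x l \<theta>) \<inter> thr_set V x (i+1) \<theta>))"
proof -
  define g where "g j = min (prefix_max x i j) (x (Suc i) j)" for j
  have g_range: "0 \<le> g j \<and> g j \<le> \<delta>" if "j \<in> V" for j
  proof -
    have col: "\<forall>l\<in>{1..k}. 0 \<le> x l j" "(\<Sum>l=1..k. x l j) = 1"
      using nonneg sum_one that by auto
    have "g j \<le> 1/2"
      unfolding g_def using col \<open>Suc i \<le> k\<close>
      by (intro min_prefix_max_le_half partial_sum_le_one) auto
    moreover have "0 \<le> g j"
      using prefix_max_nonneg col \<open>Suc i \<le> k\<close> by (simp add: g_def)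
    ultimately show ?thesis using \<open>1/2 \<le> \<delta>\<close> by linarith
  qed
  have "(\<Sum>j\<in>V. y j * g j) \<le> integral {0..\<delta>} (\<lambda>\<theta>. f {j\<in>V. \<theta> < g j})"
    by (rule integral_submodular_level_sets_ge[OF assms(1-3) below,
          where Q="\<lambda>\<theta> j. \<theta> < g j" and w=g and a=0 and b=\<delta> and r="\<lambda>j. - g j"])
       (use has_integral_if_less[of 0 _ \<delta>, simplified] g_range in auto)
  also have "\<dots> = integral {0..\<delta>}
      (\<lambda>\<theta>. f ((\<Union>l\<in>{1..i}. thr_set V x l \<theta>) \<inter> thr_set V x (i+1) \<theta>))"
    by (rule integral_cong) (subst thr_set_union_inter_eq; simp add: g_def)
  finally show ?thesis
    by (simp add: g_def)
qed

theorem lemma4: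
  fixes V :: "'a set" and f :: "'a set \<Rightarrow> real" and k :: nat
    and t :: "nat \<Rightarrow> 'a" and x :: "nat \<Rightarrow> 'a \<Rightarrow> real" and \<delta> :: real
  assumes "finite V"
    and "\<forall>S. S \<subseteq> V \<longrightarrow> f S \<ge> 0"
    and "submodular_on V f"
    and "f {} = 0"
    and "\<forall>i\<in>{1..k}. t i \<in> V"
    and "inj_on t {1..k}"
    and "\<forall>i\<in>{1..k}. \<forall>j\<in>V. x i j \<ge> 0"
    and "\<forall>j\<in>V. (\<Sum>i=1..k. x i j) = 1"
    and "\<forall>i\<in>{1..k}. x i (t i) = 1"
    and "1/2 \<le> \<delta>" and "\<delta> \<le> 1"
  shows "(\<Sum>i=1..k-1. integral {0..\<delta>}
            (\<lambda>\<theta>. f ((\<Union>l\<in>{1..i}. thr_set V x l \<theta>) \<inter> thr_set V x (i+1) \<theta>)))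
         \<ge> integral {0..1} (\<lambda>\<theta>. f (V - (\<Union>i\<in>{1..k}. thr_set V x i \<theta>)))"
proof -
  let ?g = "\<lambda>i j. min (prefix_max x i j) (x (Suc i) j)"
  obtain y where below: "\<forall>S\<subseteq>V. sum y S \<le> f S"
    and rhs: "integral {0..1} (\<lambda>\<theta>. f (V - (\<Union>i\<in>{1..k}. thr_set V x i \<theta>))) =
      (\<Sum>j\<in>V. y j * (1 - prefix_max x k j))"
    using integral_uncovered_eq_modular[OF assms(1,3,4,7,8)] by blast
  note rhs
  also have "\<dots> = (\<Sum>j\<in>V. \<Sum>i=1..k-1. y j * ?g i j)"
  proof (rule sum.cong[OF refl])
    fix j assume "j \<in> V"
    then have "1 - prefix_max x k j = (\<Sum>i=1..k-1. ?g i j)"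
      using assms(7,8) by (intro one_minus_prefix_max_eq_sum_min) auto
    then show "y j * (1 - prefix_max x k j) = (\<Sum>i=1..k-1. y j * ?g i j)"
      by (simp add: sum_distrib_left)
  qed
  also have "\<dots> = (\<Sum>i=1..k-1. \<Sum>j\<in>V. y j * ?g i j)"
    by (rule sum.swap)
  also have "\<dots> \<le> (\<Sum>i=1..k-1. integral {0..\<delta>}
      (\<lambda>\<theta>. f ((\<Union>l\<in>{1..i}. thr_set V x l \<theta>) \<inter> thr_set V x (i+1) \<theta>)))"
  proof (rule sum_mono)
    fix i assume "i \<in> {1..k-1}"
    then show "(\<Sum>j\<in>V. y j * ?g i j) \<le> integral {0..\<delta>}
        (\<lambda>\<theta>. f ((\<Union>l\<in>{1..i}. thr_set V x l \<theta>) \<inter> thr_set V x (i+1) \<theta>))"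
      by (intro integral_union_inter_ge_modular[OF assms(1,3,4) below assms(7,8,10)]) auto
  qed
  finally show ?thesis .
qed

end
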